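(* Let $T$ be a set of formulas in $i,n$ which axiomatizes two-valued (classical) propositional logic with condensed detachment as the sole rule of inference, i.e. the formulas provable from $T$ by condensed detachment are exactly the classical tautologies in $i,n$. Suppose that each of L1 $=i(i(x,y),i(i(y,z),i(x,z)))$, L2 $=i(i(n(x),x),x)$, L3 $=i(x,i(n(x),y))$ has a double-negation-free condensed-detachment proof from $T$. Then $T$ (with condensed detachment) admits strong double-negation elimination.
   Context: Formulas are terms built from propositional variables using the binary connective $i$ (implication) and the unary connective $n$ (negation). Condensed detachment: from a major premiss $i(A,B)$ and a minor premiss $C$, after renaming variables so that the two premisses share no variables, if $A$ and $C$ are unifiable with most general unifier $\sigma$, infer $B\sigma$. Alphabetic variants of axioms count as axioms, and conclusions may be renamed. A proof is a finite sequence of formulas each an axiom or obtained from earlier lines by the rule; deduced steps are the non-axiom lines. A formula contains a double negation if it has a (not necessarily proper) subformula of the form $n(n(t))$; a proof is double-negation free if none of its deduced steps contains a double negation. Given a formula $B$, a formula $B^*$ is obtained from $B$ by selecting some set of doubly negated subformulas $n(n(q))$ of $B$ and replacing all occurrences of each selected subformula by $q$. A system admits strong double-negation elimination if whenever it proves $B$ and $B^*$ is obtained from $B$ in this way, there is a proof of $B^*$ in the system in which every subformula of the form $n(n(t))$ of a deduced step occurs (up to renaming of variables) as a subformula of $B^*$. *)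

theory Defs
  imports Main
begin

datatype form = Var nat | I form form | N form

fun vars :: "form \<Rightarrow> nat set" where
  "vars (Var x) = {x}"
| "vars (I a b) = vars a \<union> vars b"
| "vars (N a) = vars a"

fun subst :: "(nat \<Rightarrow> form) \<Rightarrow> form \<Rightarrow> form" where
  "subst \<sigma> (Var x) = \<sigma> x"
| "subst \<sigma> (I a b) = I (subst \<sigma> a) (subst \<sigma> b)"
| "subst \<sigma> (N a) = N (subst \<sigma> a)"

fun rename :: "(nat \<Rightarrow> nat) \<Rightarrow> form \<Rightarrow> form" where
  "rename \<rho> (Var x) = Var (\<rho> x)"
| "rename \<rho> (I a b) = I (rename \<rho> a) (rename \<rho> b)"
| "rename \<rho> (N a) = N (rename \<rho> a)"

definition variant :: "form \<Rightarrow> form \<Rightarrow> bool" where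
  "variant s t \<longleftrightarrow> (\<exists>\<rho>. inj \<rho> \<and> t = rename \<rho> s)"

definition is_mgu :: "(nat \<Rightarrow> form) \<Rightarrow> form \<Rightarrow> form \<Rightarrow> bool" where
  "is_mgu \<sigma> a c \<longleftrightarrow> subst \<sigma> a = subst \<sigma> c \<and>
     (\<forall>\<tau>. subst \<tau> a = subst \<tau> c \<longrightarrow> (\<exists>\<rho>. \<forall>x. \<tau> x = subst \<rho> (\<sigma> x)))"

text \<open>Condensed detachment: from major premiss M and minor premiss C infer D.
  The minor premiss is renamed apart from the major one; the conclusion may be renamed.\<close>
definition cd :: "form \<Rightarrow> form \<Rightarrow> form \<Rightarrow> bool" where
  "cd M C D \<longleftrightarrow> (\<exists>A B C' \<sigma>. M = I A B \<and> variant C C' \<and> vars M \<inter> vars C' = {} \<and>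
      is_mgu \<sigma> A C' \<and> variant (subst \<sigma> B) D)"

definition is_axiom :: "form set \<Rightarrow> form \<Rightarrow> bool" where
  "is_axiom T A \<longleftrightarrow> (\<exists>a\<in>T. variant a A)"

definition is_proof :: "form set \<Rightarrow> form list \<Rightarrow> bool" where
  "is_proof T ps \<longleftrightarrow> (\<forall>i<length ps. is_axiom T (ps ! i) \<or>
      (\<exists>j<i. \<exists>k<i. cd (ps ! j) (ps ! k) (ps ! i)))"

definition proof_of :: "form set \<Rightarrow> form list \<Rightarrow> form \<Rightarrow> bool" where
  "proof_of T ps B \<longleftrightarrow> is_proof T ps \<and> ps \<noteq> [] \<and> last ps = B"

definition provable :: "form set \<Rightarrow> form \<Rightarrow> bool" where
  "provable T B \<longleftrightarrow> (\<exists>ps. proof_of T ps B)"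

definition deduced_steps :: "form set \<Rightarrow> form list \<Rightarrow> form set" where
  "deduced_steps T ps = {ps ! i | i. i < length ps \<and> \<not> is_axiom T (ps ! i)}"

fun subforms :: "form \<Rightarrow> form set" where
  "subforms (Var x) = {Var x}"
| "subforms (I a b) = insert (I a b) (subforms a \<union> subforms b)"
| "subforms (N a) = insert (N a) (subforms a)"

definition is_dn :: "form \<Rightarrow> bool" where
  "is_dn u \<longleftrightarrow> (\<exists>t. u = N (N t))"

definition has_dn :: "form \<Rightarrow> bool" where
  "has_dn A \<longleftrightarrow> (\<exists>u\<in>subforms A. is_dn u)"

definition dn_free_proof :: "form set \<Rightarrow> form list \<Rightarrow> bool" where
  "dn_free_proof T ps \<longleftrightarrow> (\<forall>A\<in>deduced_steps T ps. \<not> has_dn A)"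

fun dn_replace :: "form set \<Rightarrow> form \<Rightarrow> form" where
  "dn_replace S (Var x) = Var x"
| "dn_replace S (I a b) = I (dn_replace S a) (dn_replace S b)"
| "dn_replace S (N a) =
     (case a of N q \<Rightarrow> (if N (N q) \<in> S then dn_replace S q else N (N (dn_replace S q)))
              | _ \<Rightarrow> N (dn_replace S a))"

definition strong_dn_elim :: "form set \<Rightarrow> bool" where
  "strong_dn_elim T \<longleftrightarrow>
     (\<forall>B S. provable T B \<and> S \<subseteq> {u \<in> subforms B. is_dn u} \<longrightarrow>
        (\<exists>ps. proof_of T ps (dn_replace S B) \<and>
           (\<forall>A\<in>deduced_steps T ps. \<forall>u\<in>subforms A. is_dn u \<longrightarrow>
              (\<exists>w\<in>subforms (dn_replace S B). variant u w))))"

fun eval :: "(nat \<Rightarrow> bool) \<Rightarrow> form \<Rightarrow> bool" where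
  "eval v (Var x) = v x"
| "eval v (I a b) = (eval v a \<longrightarrow> eval v b)"
| "eval v (N a) = (\<not> eval v a)"

definition tautology :: "form \<Rightarrow> bool" where
  "tautology A \<longleftrightarrow> (\<forall>v. eval v A)"

definition L1 :: form where
  "L1 = I (I (Var 0) (Var 1)) (I (I (Var 1) (Var 2)) (I (Var 0) (Var 2)))"
definition L2 :: form where
  "L2 = I (I (N (Var 0)) (Var 0)) (Var 0)"
definition L3 :: form where
  "L3 = I (Var 0) (I (N (Var 0)) (Var 1))"

end

(*
  B is provable, hence a tautology, and so is B*, since cancelling double negations preserves truth
  values. B* is then derived from Lukasiewicz's axioms L1, L2, L3 by Kalmar's completeness argument:
  from the hypotheses p or n(p), as they are true in a valuation v, each subformula A of B* yields
  the one of A and n(A) that is true under v, and the hypotheses are then discharged one at a time.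
  All schemas used are double-negation-free theorems of L1, L2, L3, and a false formula n(q) is
  represented by q rather than by n(n(q)); so every double negation in a deduced step is a renamed
  subformula of B*. Finally L1, L2, L3 are replaced by their double-negation-free proofs from T.
*)
theory Submission
  imports Defs
begin

notation I (infixr "\<rightarrow>" 60)

lemma finite_vars [simp]: "finite (vars t)"
  by (induction t) auto

lemma subst_cong: "(\<And>x. x \<in> vars t \<Longrightarrow> \<sigma> x = \<tau> x) \<Longrightarrow> subst \<sigma> t = subst \<tau> t"
  by (induction t) auto

lemma subst_eq_on_vars: "subst \<sigma> t = subst \<tau> t \<Longrightarrow> x \<in> vars t \<Longrightarrow> \<sigma> x = \<tau> x"
  by (induction t) auto

lemma subst_Var [simp]: "subst Var t = t"
  by (induction t) auto

lemma subst_subst: "subst \<tau> (subst \<sigma> t) = subst (\<lambda>x. subst \<tau> (\<sigma> x)) t"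
  by (induction t) auto

lemma vars_subst: "vars (subst \<sigma> t) = (\<Union>x\<in>vars t. vars (\<sigma> x))"
  by (induction t) auto

lemma rename_eq_subst: "rename f t = subst (Var \<circ> f) t"
  by (induction t) auto

lemma vars_rename: "vars (rename f t) = f ` vars t"
  by (induction t) auto

lemma rename_rename: "rename g (rename f t) = rename (g \<circ> f) t"
  by (induction t) auto

lemma rename_cong: "(\<And>x. x \<in> vars t \<Longrightarrow> f x = g x) \<Longrightarrow> rename f t = rename g t"
  by (induction t) auto

lemma rename_id [simp]: "rename id t = t"
  by (induction t) auto

lemma eval_subst: "eval v (subst \<sigma> t) = eval (\<lambda>x. eval v (\<sigma> x)) t"
  by (induction t) auto

lemma subforms_refl: "t \<in> subforms t"
  by (cases t) auto

lemma subforms_trans: "u \<in> subforms t \<Longrightarrow> t \<in> subforms s \<Longrightarrow> u \<in> subforms s"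
  by (induction s) auto

lemma vars_subforms: "u \<in> subforms t \<Longrightarrow> vars u \<subseteq> vars t"
  by (induction t) auto

lemma rename_eq_N: "rename f a = N t \<longleftrightarrow> (\<exists>b. a = N b \<and> t = rename f b)"
  by (cases a) auto

lemma subforms_rename: "subforms (rename f t) = rename f ` subforms t"
  by (induction t) auto

lemma inj_on_extend_nat:
  fixes f :: "nat \<Rightarrow> nat"
  assumes "finite X" "inj_on f X"
  shows "\<exists>g. inj g \<and> (\<forall>x\<in>X. g x = f x)"
proof -
  obtain M where M: "\<And>x. x \<in> X \<Longrightarrow> f x < M"
    using finite_nat_set_iff_bounded[of "f ` X"] assms(1) by auto
  define g where "g x = (if x \<in> X then f x else M + x)" for x
  have "inj g"
  proof (rule injI)
    fix x y assume "g x = g y"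
    then show "x = y"
      using assms(2) M[of x] M[of y] by (auto simp: g_def inj_on_def split: if_splits)
  qed
  then show ?thesis
    by (auto simp: g_def)
qed

lemma variant_refl: "variant t t"
  unfolding variant_def by (metis inj_on_id rename_id)

lemma variant_trans: "variant s t \<Longrightarrow> variant t u \<Longrightarrow> variant s u"
  unfolding variant_def by (metis inj_compose rename_rename)

lemma variant_rename_inj_on:
  assumes "inj_on f (vars t)"
  shows "variant t (rename f t)"
proof -
  obtain g where "inj g" "\<forall>x\<in>vars t. g x = f x"
    using inj_on_extend_nat[OF finite_vars assms] by blast
  then show ?thesis
    unfolding variant_def by (metis rename_cong)
qed

lemma variant_sym: "variant s t \<Longrightarrow> variant t s"
proof -
  assume "variant s t"
  then obtain f where f: "inj f" "t = rename f s"
    unfolding variant_def by auto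
  then have "rename (inv f) t = s" and "inj_on (inv f) (vars t)"
    by (auto simp: rename_rename vars_rename inj_on_def)
  then show ?thesis
    using variant_rename_inj_on by metis
qed

lemma variant_shift: "variant t (rename ((+) k) t)"
  by (rule variant_rename_inj_on) simp

section \<open>Unification\<close>

definition unifies :: "(nat \<Rightarrow> form) \<Rightarrow> (form \<times> form) list \<Rightarrow> bool" where
  "unifies \<sigma> es \<longleftrightarrow> (\<forall>(a, b) \<in> set es. subst \<sigma> a = subst \<sigma> b)"

definition is_mgu_list :: "(nat \<Rightarrow> form) \<Rightarrow> (form \<times> form) list \<Rightarrow> bool" where
  "is_mgu_list \<sigma> es \<longleftrightarrow> unifies \<sigma> es \<and> (\<forall>\<tau>. unifies \<tau> es \<longrightarrow> (\<exists>\<rho>. \<forall>x. \<tau> x = subst \<rho> (\<sigma> x)))"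

lemma unifies_simps [simp]:
  "unifies \<sigma> []"
  "unifies \<sigma> ((a, b) # es) \<longleftrightarrow> subst \<sigma> a = subst \<sigma> b \<and> unifies \<sigma> es"
  by (auto simp: unifies_def)

lemma is_mgu_list_Nil: "is_mgu_list Var []"
  by (auto simp: is_mgu_list_def)

lemma is_mgu_list_cong:
  "(\<And>\<tau>. unifies \<tau> es' \<longleftrightarrow> unifies \<tau> es) \<Longrightarrow> is_mgu_list \<sigma> es \<Longrightarrow> is_mgu_list \<sigma> es'"
  by (simp add: is_mgu_list_def)

lemma is_mgu_list_refl: "is_mgu_list \<sigma> es \<Longrightarrow> is_mgu_list \<sigma> ((t, t) # es)"
  by (rule is_mgu_list_cong) auto

lemma is_mgu_list_swap: "is_mgu_list \<sigma> ((b, a) # es) \<Longrightarrow> is_mgu_list \<sigma> ((a, b) # es)"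
  by (rule is_mgu_list_cong) auto

lemma is_mgu_list_I:
  "is_mgu_list \<sigma> ((a, c) # (b, d) # es) \<Longrightarrow> is_mgu_list \<sigma> ((a \<rightarrow> b, c \<rightarrow> d) # es)"
  by (rule is_mgu_list_cong) auto

lemma is_mgu_list_N: "is_mgu_list \<sigma> ((a, c) # es) \<Longrightarrow> is_mgu_list \<sigma> ((N a, N c) # es)"
  by (rule is_mgu_list_cong) auto

lemma subst_upd_absorb:
  assumes "\<tau> x = subst \<tau> t"
  shows "subst \<tau> (subst (Var(x := t)) u) = subst \<tau> u"
  using assms by (induction u) auto

lemma subst_upd_notin: "x \<notin> vars u \<Longrightarrow> subst (Var(x := t)) u = u"
  by (induction u) auto

lemma is_mgu_list_elim:
  assumes "x \<notin> vars t"
    and mgu: "is_mgu_list \<sigma> (map (map_prod (subst (Var(x := t))) (subst (Var(x := t)))) es)"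
  shows "is_mgu_list (subst \<sigma> \<circ> Var(x := t)) ((Var x, t) # es)"
proof -
  let ?\<theta> = "Var(x := t)"
  have subst_comp: "subst (subst \<sigma> \<circ> ?\<theta>) u = subst \<sigma> (subst ?\<theta> u)" for u
    by (simp add: subst_subst comp_def)
  have "subst ?\<theta> t = t"
    using assms(1) by (simp add: subst_upd_notin)
  then have "unifies (subst \<sigma> \<circ> ?\<theta>) ((Var x, t) # es)"
    using mgu by (auto simp: is_mgu_list_def unifies_def subst_comp)
  moreover have "\<exists>\<rho>. \<forall>y. \<tau> y = subst \<rho> ((subst \<sigma> \<circ> ?\<theta>) y)"
    if "unifies \<tau> ((Var x, t) # es)" for \<tau>
  proof -
    have tx: "\<tau> x = subst \<tau> t"
      using that by simp
    then have "unifies \<tau> (map (map_prod (subst ?\<theta>) (subst ?\<theta>)) es)"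
      using that by (fastforce simp: unifies_def subst_upd_absorb[OF tx])
    then obtain \<rho> where \<rho>: "\<forall>y. \<tau> y = subst \<rho> (\<sigma> y)"
      using mgu by (auto simp: is_mgu_list_def)
    then have "\<tau> = subst \<rho> \<circ> \<sigma>"
      by auto
    then have "\<tau> y = subst \<rho> ((subst \<sigma> \<circ> ?\<theta>) y)" for y
      using tx by (cases "y = x") (simp_all add: subst_subst comp_def)
    then show ?thesis
      by blast
  qed
  ultimately show ?thesis
    by (simp add: is_mgu_list_def)
qed

text \<open>Robinson's algorithm.\<close>

partial_function (option) unify :: "(form \<times> form) list \<Rightarrow> (nat \<Rightarrow> form) option" where
  "unify es = (case es of
      [] \<Rightarrow> Some Var
    | (Var x, t) # es' \<Rightarrow>
        if t = Var x then unify es'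
        else if x \<in> vars t then None
        else Option.bind (unify (map (map_prod (subst (Var(x := t))) (subst (Var(x := t)))) es'))
               (\<lambda>\<sigma>. Some (subst \<sigma> \<circ> Var(x := t)))
    | (a, Var x) # es' \<Rightarrow> unify ((Var x, a) # es')
    | (a \<rightarrow> b, c \<rightarrow> d) # es' \<Rightarrow> unify ((a, c) # (b, d) # es')
    | (N a, N c) # es' \<Rightarrow> unify ((a, c) # es')
    | _ \<Rightarrow> None)"

lemma unify_sound: "unify es = Some \<sigma> \<Longrightarrow> is_mgu_list \<sigma> es"
proof (induction rule: unify.raw_induct[rotated, consumes 1])
  case (1 u es \<sigma>)
  have IH: "is_mgu_list \<sigma>' es'" if "u es' = Some \<sigma>'" for es' \<sigma>'
    using 1(1) that .
  from 1(2) show ?case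
    by (auto simp: bind_eq_Some_conv split: list.splits prod.splits form.splits if_splits
        intro: is_mgu_list_Nil is_mgu_list_refl[OF IH] is_mgu_list_elim[OF _ IH]
          is_mgu_list_swap[OF IH] is_mgu_list_I[OF IH] is_mgu_list_N[OF IH])
qed

lemma unify_simps [simp]:
  "unify [] = Some Var"
  "unify ((Var x, t) # es) =
    (if t = Var x then unify es
     else if x \<in> vars t then None
     else Option.bind (unify (map (map_prod (subst (Var(x := t))) (subst (Var(x := t)))) es))
            (\<lambda>\<sigma>. Some (subst \<sigma> \<circ> Var(x := t))))"
  "unify ((a \<rightarrow> b, Var x) # es) = unify ((Var x, a \<rightarrow> b) # es)"
  "unify ((N a, Var x) # es) = unify ((Var x, N a) # es)"
  "unify ((a \<rightarrow> b, c \<rightarrow> d) # es) = unify ((a, c) # (b, d) # es)"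
  "unify ((N a, N c) # es) = unify ((a, c) # es)"
  "unify ((a \<rightarrow> b, N c) # es) = None"
  "unify ((N a, c \<rightarrow> d) # es) = None"
  by (subst unify.simps; simp split: form.split)+

lemma is_mgu_matcher:
  assumes "subst \<sigma> A = C" and "\<forall>x. x \<notin> vars A \<longrightarrow> \<sigma> x = Var x" and "vars A \<inter> vars C = {}"
  shows "is_mgu \<sigma> A C"
  unfolding is_mgu_def
proof (intro conjI allI impI)
  have "subst \<sigma> C = subst Var C"
    using assms(2,3) by (intro subst_cong) auto
  then show "subst \<sigma> A = subst \<sigma> C"
    using assms(1) by simp
  fix \<tau> assume "subst \<tau> A = subst \<tau> C"
  then have "subst \<tau> A = subst (\<lambda>x. subst \<tau> (\<sigma> x)) A"
    by (simp add: subst_subst[symmetric] assms(1))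
  then have "\<tau> x = subst \<tau> (\<sigma> x)" for x
    using assms(2) subst_eq_on_vars by (cases "x \<in> vars A") auto
  then show "\<exists>\<rho>. \<forall>x. \<tau> x = subst \<rho> (\<sigma> x)"
    by blast
qed

fun var_list :: "form \<Rightarrow> nat list" where
  "var_list (Var x) = [x]"
| "var_list (a \<rightarrow> b) = var_list a @ var_list b"
| "var_list (N a) = var_list a"

lemma set_var_list [simp]: "set (var_list t) = vars t"
  by (induction t) auto

fun index :: "nat list \<Rightarrow> nat \<Rightarrow> nat" where
  "index [] x = 0"
| "index (y # ys) x = (if x = y then 0 else Suc (index ys x))"

lemma nth_index: "x \<in> set xs \<Longrightarrow> xs ! index xs x = x"
  by (induction xs) auto

text \<open>Variables are renamed to 0, 1, 2, ... in order of first occurrence, the form in which the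
  computed schemas are stated below.\<close>

definition normalize_vars :: "form \<Rightarrow> form" where
  "normalize_vars t = rename (index (rev (remdups (rev (var_list t))))) t"

lemma variant_normalize_vars: "variant t (normalize_vars t)"
proof -
  let ?xs = "rev (remdups (rev (var_list t)))"
  have "inj_on (index ?xs) (set ?xs)"
    by (rule inj_on_inverseI[where g = "(!) ?xs"]) (rule nth_index)
  then show ?thesis
    unfolding normalize_vars_def by (simp add: variant_rename_inj_on)
qed

definition cd_exec :: "form \<Rightarrow> form \<Rightarrow> form option" where
  "cd_exec M C = (case M of
      A \<rightarrow> B \<Rightarrow> map_option (\<lambda>\<sigma>. normalize_vars (subst \<sigma> B))
                 (unify [(A, rename ((+) (Suc (Max (vars M)))) C)])
    | _ \<Rightarrow> None)"

lemma cd_exec_sound: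
  assumes "cd_exec M C = Some D"
  shows "cd M C D"
proof -
  obtain A B \<sigma> where M: "M = A \<rightarrow> B"
    and \<sigma>: "unify [(A, rename ((+) (Suc (Max (vars M)))) C)] = Some \<sigma>"
    and D: "D = normalize_vars (subst \<sigma> B)"
    using assms by (auto simp: cd_exec_def split: form.splits)
  let ?C' = "rename ((+) (Suc (Max (vars M)))) C"
  have "vars M \<inter> vars ?C' = {}"
    by (auto simp: vars_rename dest: Max_ge[OF finite_vars])
  moreover have "is_mgu \<sigma> A ?C'"
    using unify_sound[OF \<sigma>] by (simp add: is_mgu_list_def is_mgu_def unifies_def)
  ultimately show ?thesis
    unfolding cd_def using M D variant_shift variant_normalize_vars by blast
qed

section \<open>Derivations whose deduced steps satisfy a predicate\<close>

inductive derivable :: "form set \<Rightarrow> (form \<Rightarrow> bool) \<Rightarrow> form \<Rightarrow> bool" for T P where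
  axiom: "is_axiom T X \<Longrightarrow> derivable T P X"
| detach: "derivable T P M \<Longrightarrow> derivable T P C \<Longrightarrow> cd M C X \<Longrightarrow> P X \<Longrightarrow> derivable T P X"

lemma derivable_member: "X \<in> T \<Longrightarrow> derivable T P X"
  by (rule derivable.axiom) (auto simp: is_axiom_def intro: variant_refl)

lemma deduced_steps_eq: "deduced_steps T ps = {A \<in> set ps. \<not> is_axiom T A}"
  by (auto simp: deduced_steps_def in_set_conv_nth)

lemma is_proof_snoc:
  "is_proof T (ps @ [X]) \<longleftrightarrow>
     is_proof T ps \<and> (is_axiom T X \<or> (\<exists>j<length ps. \<exists>k<length ps. cd (ps ! j) (ps ! k) X))"
proof -
  have nth: "(ps @ [X]) ! j = ps ! j" if "j < i" "i \<le> length ps" for i j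
    using that by (simp add: nth_append_left)
  have "(\<forall>i<length ps. is_axiom T ((ps @ [X]) ! i) \<or>
          (\<exists>j<i. \<exists>k<i. cd ((ps @ [X]) ! j) ((ps @ [X]) ! k) ((ps @ [X]) ! i))) \<longleftrightarrow> is_proof T ps"
    unfolding is_proof_def by (auto simp: nth cong: ex_cong1 conj_cong)
  moreover have "is_proof T (ps @ [X]) \<longleftrightarrow>
      (\<forall>i<length ps. is_axiom T ((ps @ [X]) ! i) \<or>
          (\<exists>j<i. \<exists>k<i. cd ((ps @ [X]) ! j) ((ps @ [X]) ! k) ((ps @ [X]) ! i))) \<and>
      (is_axiom T X \<or> (\<exists>j<length ps. \<exists>k<length ps. cd (ps ! j) (ps ! k) X))"
    unfolding is_proof_def by (auto simp: less_Suc_eq nth[of _ "length ps"] cong: conj_cong)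
  ultimately show ?thesis
    by blast
qed

lemma is_proof_append: "is_proof T ps \<Longrightarrow> is_proof T qs \<Longrightarrow> is_proof T (ps @ qs)"
proof (induction qs rule: rev_induct)
  case (snoc X qs)
  then have "is_proof T (ps @ qs)"
    by (simp add: is_proof_snoc)
  moreover have "is_axiom T X \<or> (\<exists>j<length (ps @ qs). \<exists>k<length (ps @ qs).
      cd ((ps @ qs) ! j) ((ps @ qs) ! k) X)"
    using snoc.prems(2) unfolding is_proof_snoc
    by (metis length_append nat_add_left_cancel_less nth_append_length_plus)
  ultimately show ?case
    using is_proof_snoc[of T "ps @ qs" X] by simp
qed simp

lemma derivable_imp_proof:
  "derivable T P X \<Longrightarrow> \<exists>ps. proof_of T ps X \<and> (\<forall>A\<in>deduced_steps T ps. P A)"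
proof (induction rule: derivable.induct)
  case (axiom X)
  then have "is_proof T [X]"
    using is_proof_snoc[of T "[]"] by (simp add: is_proof_def)
  with axiom show ?case
    by (intro exI[of _ "[X]"]) (simp add: proof_of_def deduced_steps_eq)
next
  case (detach M C X)
  then obtain ps qs where ps: "proof_of T ps M" "\<forall>A\<in>deduced_steps T ps. P A"
    and qs: "proof_of T qs C" "\<forall>A\<in>deduced_steps T qs. P A"
    by blast
  let ?j = "length ps - 1" and ?k = "length ps + (length qs - 1)"
  have "ps \<noteq> []" "qs \<noteq> []" "last ps = M" "last qs = C" "is_proof T ps" "is_proof T qs"
    using ps(1) qs(1) by (simp_all add: proof_of_def)
  then have "(ps @ qs) ! ?j = M" "(ps @ qs) ! ?k = C" "is_proof T (ps @ qs)"
    by (simp_all add: last_conv_nth nth_append_left is_proof_append)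
  moreover have "?j < length (ps @ qs)" "?k < length (ps @ qs)"
    using ps(1) qs(1) unfolding proof_of_def length_append length_greater_0_conv[symmetric]
    by arith+
  ultimately have "is_proof T ((ps @ qs) @ [X])"
    using detach.hyps(3) unfolding is_proof_snoc by metis
  moreover have "\<forall>A\<in>deduced_steps T ((ps @ qs) @ [X]). P A"
    using ps(2) qs(2) detach.hyps(4) by (auto simp: deduced_steps_eq)
  ultimately show ?case
    by (intro exI[of _ "(ps @ qs) @ [X]"]) (simp add: proof_of_def)
qed

lemma proof_lines_derivable:
  assumes "is_proof T ps" and "\<forall>A\<in>deduced_steps T ps. P A" and "i < length ps"
  shows "derivable T P (ps ! i)"
  using assms(3)
proof (induction i rule: less_induct)
  case (less i)
  show ?case
  proof (cases "is_axiom T (ps ! i)")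
    case True
    then show ?thesis
      by (rule derivable.axiom)
  next
    case False
    then have P: "P (ps ! i)"
      using assms(2) less.prems by (auto simp: deduced_steps_eq)
    obtain j k where jk: "j < i" "k < i" "cd (ps ! j) (ps ! k) (ps ! i)"
      using assms(1) less.prems False by (auto simp: is_proof_def)
    have "derivable T P (ps ! j)" and "derivable T P (ps ! k)"
      using less.IH jk(1,2) less.prems by simp_all
    from derivable.detach[OF this jk(3) P] show ?thesis .
  qed
qed

lemma proof_of_derivable:
  assumes "proof_of T ps X" and "\<forall>A\<in>deduced_steps T ps. P A"
  shows "derivable T P X"
proof -
  have "is_proof T ps" "length ps - 1 < length ps" "ps ! (length ps - 1) = X"
    using assms(1) by (auto simp: proof_of_def last_conv_nth)
  then show ?thesis
    using proof_lines_derivable[OF _ assms(2), of "length ps - 1"] by simp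
qed

lemma cd_variant: "cd M C X \<Longrightarrow> variant X Y \<Longrightarrow> cd M C Y"
  unfolding cd_def by (blast intro: variant_trans)

lemma derivable_variant:
  assumes "derivable T P X" and "variant X Y" and "\<And>X Y. P X \<Longrightarrow> variant X Y \<Longrightarrow> P Y"
  shows "derivable T P Y"
  using assms(1,2)
proof (induction arbitrary: Y rule: derivable.induct)
  case (axiom X)
  then have "is_axiom T Y"
    by (meson is_axiom_def variant_trans)
  then show ?case
    by (rule derivable.axiom)
next
  case (detach M C X)
  show ?case
    using derivable.detach[OF detach.hyps(1,2) cd_variant[OF detach.hyps(3) detach.prems]]
      assms(3)[OF detach.hyps(4) detach.prems] .
qed

lemma derivable_pred:
  assumes "derivable T P X" and "\<And>A. A \<in> T \<Longrightarrow> P A" and "\<And>X Y. P X \<Longrightarrow> variant X Y \<Longrightarrow> P Y"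
  shows "P X"
  using assms(1)
proof induction
  case (axiom X)
  then obtain A where "A \<in> T" "variant A X"
    by (auto simp: is_axiom_def)
  then show ?case
    using assms(2,3) by blast
qed

lemma derivable_replace_axioms:
  assumes "derivable T' P X" and "\<And>A. is_axiom T' A \<Longrightarrow> derivable T P A"
  shows "derivable T P X"
  using assms(1)
proof (induction rule: derivable.induct)
  case (axiom X)
  then show ?case
    by (rule assms(2))
next
  case (detach M C X)
  show ?case
    by (rule derivable.detach[OF detach.IH detach.hyps(3,4)])
qed

lemma variant_subst_renamed_apart:
  assumes fresh: "\<forall>x\<in>vars B - vars A. \<exists>y. \<sigma> x = Var y \<and> y \<notin> vars (subst \<sigma> A)"
    and inj: "inj_on \<sigma> (vars B - vars A)" and m: "\<forall>x\<in>vars (A \<rightarrow> B) \<union> vars (subst \<sigma> A). x < m"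
  defines "\<mu> \<equiv> \<lambda>x. if x \<in> vars A then rename ((+) m) (\<sigma> x) else Var x"
  shows "variant (subst \<mu> B) (subst \<sigma> B)"
proof -
  let ?C = "subst \<sigma> A"
  define \<pi> where "\<pi> y = (if m \<le> y then y - m else case \<sigma> y of Var z \<Rightarrow> z | _ \<Rightarrow> y)" for y
  have shifted: "m \<le> y \<and> \<pi> y \<in> vars ?C" if "y \<in> (+) m ` vars ?C" for y
    using that by (auto simp: \<pi>_def)
  have unshifted: "y < m \<and> \<sigma> y = Var (\<pi> y) \<and> \<pi> y \<notin> vars ?C" if y: "y \<in> vars B - vars A" for y
  proof -
    obtain z where "\<sigma> y = Var z" "z \<notin> vars ?C"
      using bspec[OF fresh y] by blast
    moreover have "y < m"
      using m y by simp
    ultimately show ?thesis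
      by (simp add: \<pi>_def)
  qed
  have "rename \<pi> (\<mu> x) = \<sigma> x" if "x \<in> vars B" for x
  proof (cases "x \<in> vars A")
    case True
    have "rename (\<pi> \<circ> (+) m) t = t" for t
      by (induction t) (simp_all add: \<pi>_def)
    then show ?thesis
      using True by (simp add: \<mu>_def rename_rename)
  qed (use unshifted[of x] that in \<open>simp add: \<mu>_def\<close>)
  then have "rename \<pi> (subst \<mu> B) = subst \<sigma> B"
    unfolding rename_eq_subst subst_subst by (intro subst_cong) (simp add: rename_eq_subst)
  moreover have "vars (subst \<mu> B) \<subseteq> (+) m ` vars ?C \<union> (vars B - vars A)"
  proof -
    have "vars (\<mu> x) \<subseteq> (+) m ` vars ?C \<union> (vars B - vars A)" if "x \<in> vars B" for x
      using that by (auto simp: \<mu>_def vars_rename vars_subst)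
    then show ?thesis
      by (auto simp: vars_subst)
  qed
  moreover have "inj_on \<pi> ((+) m ` vars ?C \<union> (vars B - vars A))"
  proof (rule inj_onI)
    fix y1 y2
    assume y: "y1 \<in> (+) m ` vars ?C \<union> (vars B - vars A)" "y2 \<in> (+) m ` vars ?C \<union> (vars B - vars A)"
      and eq: "\<pi> y1 = \<pi> y2"
    show "y1 = y2"
    proof (cases "y1 \<in> vars B - vars A \<and> y2 \<in> vars B - vars A")
      case True
      then have "\<sigma> y1 = \<sigma> y2"
        using unshifted eq by metis
      then show ?thesis
        using inj True by (simp add: inj_on_def)
    qed (use y eq shifted[of y1] shifted[of y2] unshifted[of y1] unshifted[of y2]
        in \<open>auto simp: \<pi>_def\<close>)
  qed
  ultimately show ?thesis
    using variant_rename_inj_on inj_on_subset by metis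
qed

lemma cd_instance:
  assumes "\<forall>x\<in>vars B - vars A. \<exists>y. \<sigma> x = Var y \<and> y \<notin> vars (subst \<sigma> A)"
    and "inj_on \<sigma> (vars B - vars A)"
  shows "cd (A \<rightarrow> B) (subst \<sigma> A) (subst \<sigma> B)"
proof -
  obtain m where m: "\<forall>x\<in>vars (A \<rightarrow> B) \<union> vars (subst \<sigma> A). x < m"
    using finite_nat_set_iff_bounded[of "vars (A \<rightarrow> B) \<union> vars (subst \<sigma> A)"] by auto
  let ?C' = "rename ((+) m) (subst \<sigma> A)"
  define \<mu> where "\<mu> = (\<lambda>x. if x \<in> vars A then rename ((+) m) (\<sigma> x) else Var x)"
  have "subst \<mu> A = subst (\<lambda>x. rename ((+) m) (\<sigma> x)) A"
    by (rule subst_cong) (simp add: \<mu>_def)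
  then have "subst \<mu> A = ?C'"
    by (simp add: rename_eq_subst subst_subst comp_def)
  moreover have disj: "vars (A \<rightarrow> B) \<inter> vars ?C' = {}"
    using m by (auto simp: vars_rename)
  ultimately have "is_mgu \<mu> A ?C'"
    by (intro is_mgu_matcher) (auto simp: \<mu>_def)
  moreover have "variant (subst \<mu> B) (subst \<sigma> B)"
    unfolding \<mu>_def using assms m by (rule variant_subst_renamed_apart)
  ultimately show ?thesis
    unfolding cd_def using variant_shift disj by blast
qed

lemma derivable_instance:
  assumes "derivable T P (A \<rightarrow> B)" and "derivable T P (subst \<sigma> A)"
    and "\<forall>x\<in>vars B - vars A. \<exists>y. \<sigma> x = Var y \<and> y \<notin> vars (subst \<sigma> A)"
    and "inj_on \<sigma> (vars B - vars A)" and "P (subst \<sigma> B)"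
  shows "derivable T P (subst \<sigma> B)"
  using derivable.detach[OF assms(1,2) cd_instance[OF assms(3,4)] assms(5)] .

lemma derivable_mp:
  assumes "derivable T P (A \<rightarrow> B)" and "derivable T P (subst \<sigma> A)" and "vars B \<subseteq> vars A"
    and "P (subst \<sigma> B)"
  shows "derivable T P (subst \<sigma> B)"
  using assms(3) by (intro derivable_instance[OF assms(1,2)] assms(4)) (auto simp: inj_on_def)

lemma subst_unshift:
  assumes "\<forall>z\<in>vars A. \<forall>x\<in>vars (\<sigma> z). x < m"
  defines "\<theta> \<equiv> \<lambda>y. if y \<in> vars A then \<sigma> y else Var (y + m)"
    and "\<tau> \<equiv> \<lambda>y. if m \<le> y then \<sigma> (y - m) else Var y"
  shows "subst \<tau> (subst \<theta> X) = subst \<sigma> X"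
proof -
  have "subst \<tau> (\<theta> z) = \<sigma> z" for z
  proof (cases "z \<in> vars A")
    case True
    have "subst \<tau> (\<sigma> z) = subst Var (\<sigma> z)"
    proof (rule subst_cong)
      fix x assume "x \<in> vars (\<sigma> z)"
      then have "x < m"
        using assms(1) True by blast
      then show "\<tau> x = Var x"
        by (simp add: \<tau>_def)
    qed
    then show ?thesis
      using True by (simp add: \<theta>_def)
  qed (simp add: \<theta>_def \<tau>_def)
  then show ?thesis
    by (simp add: subst_subst)
qed

lemma derivable_detach_shifted:
  assumes R: "derivable T P (A \<rightarrow> B)" and D: "derivable T P (subst \<sigma> A)"
    and m: "\<forall>x\<in>vars (subst \<sigma> A). x < m"
  defines "\<theta> \<equiv> \<lambda>y. if y \<in> vars A then \<sigma> y else Var (y + m)"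
  assumes PB: "P (subst \<theta> B)"
  shows "derivable T P (subst \<theta> B)"
proof (rule derivable_instance[OF R])
  have \<theta>A: "subst \<theta> A = subst \<sigma> A"
    by (rule subst_cong) (simp add: \<theta>_def)
  then show "derivable T P (subst \<theta> A)"
    using D by simp
  show "\<forall>x\<in>vars B - vars A. \<exists>y. \<theta> x = Var y \<and> y \<notin> vars (subst \<theta> A)"
    using m \<theta>A by (auto simp: \<theta>_def)
  show "inj_on \<theta> (vars B - vars A)"
    by (rule inj_onI) (simp add: \<theta>_def)
qed (fact PB)

lemma vars_detach_shifted_fresh:
  assumes m: "\<forall>x\<in>vars (subst \<sigma> A1). x < m" and vB: "vars B \<subseteq> vars A1 \<union> vars A2"
    and H: "\<forall>x\<in>vars A1 - vars A2.
      vars (\<sigma> x) \<inter> vars (subst \<sigma> A2) \<subseteq> (\<Union>z\<in>vars A1 \<inter> vars A2. vars (\<sigma> z))"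
  defines "\<theta> \<equiv> \<lambda>y. if y \<in> vars A1 then \<sigma> y else Var (y + m)"
  assumes x: "x \<in> vars (subst \<theta> B) - vars (subst \<theta> A2)"
  shows "x < m \<and> x \<notin> vars (subst \<sigma> A2)"
proof -
  obtain z where z: "z \<in> vars B" "x \<in> vars (\<theta> z)"
    using x by (auto simp: vars_subst)
  have \<theta>\<sigma>: "\<theta> z' = \<sigma> z'" if "z' \<in> vars A1" for z'
    using that by (simp add: \<theta>_def)
  have "z \<in> vars A1"
  proof (rule ccontr)
    assume "z \<notin> vars A1"
    then have "z \<in> vars A2" "\<theta> z = Var (z + m)"
      using z(1) vB by (auto simp: \<theta>_def)
    then show False
      using x z(2) by (auto simp: vars_subst)
  qed
  moreover have "z \<notin> vars A2"
    using x z(2) by (auto simp: vars_subst)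
  ultimately have "x < m" "x \<in> vars (\<sigma> z)" "z \<in> vars A1 - vars A2"
    using m z(2) \<theta>\<sigma> by (auto simp: vars_subst)
  moreover have "x \<notin> vars (\<sigma> z')" if "z' \<in> vars A1 \<inter> vars A2" for z'
    using x that \<theta>\<sigma> by (auto simp: vars_subst)
  ultimately show ?thesis
    using H by blast
qed

text \<open>Detaching two antecedents in turn: the variables not occurring in the first antecedent are
  shifted out of the way during the first detachment, and hypothesis \<open>H\<close> keeps the images of the
  variables occurring only in the first antecedent from being captured by the second.\<close>

lemma derivable_mp2:
  assumes R: "derivable T P (A1 \<rightarrow> A2 \<rightarrow> B)"
    and D1: "derivable T P (subst \<sigma> A1)" and D2: "derivable T P (subst \<sigma> A2)"
    and vB: "vars B \<subseteq> vars A1 \<union> vars A2"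
    and H: "\<forall>x\<in>vars A1 - vars A2.
      vars (\<sigma> x) \<inter> vars (subst \<sigma> A2) \<subseteq> (\<Union>z\<in>vars A1 \<inter> vars A2. vars (\<sigma> z))"
    and P_mid: "\<And>\<theta>. \<forall>y\<in>vars A1. \<theta> y = \<sigma> y \<Longrightarrow> \<forall>y. y \<notin> vars A1 \<longrightarrow> (\<exists>v. \<theta> y = Var v)
      \<Longrightarrow> P (subst \<theta> (A2 \<rightarrow> B))"
    and PB: "P (subst \<sigma> B)"
  shows "derivable T P (subst \<sigma> B)"
proof -
  obtain m where m: "\<forall>x\<in>vars (subst \<sigma> A1). x < m"
    using finite_nat_set_iff_bounded[of "vars (subst \<sigma> A1)"] by auto
  define \<theta> where "\<theta> = (\<lambda>y. if y \<in> vars A1 then \<sigma> y else Var (y + m))"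
  define \<tau> where "\<tau> = (\<lambda>y. if m \<le> y then \<sigma> (y - m) else Var y)"
  have "derivable T P (subst \<theta> (A2 \<rightarrow> B))"
    unfolding \<theta>_def by (rule derivable_detach_shifted[OF R D1 m], rule P_mid) auto
  then have D: "derivable T P (subst \<theta> A2 \<rightarrow> subst \<theta> B)"
    by simp
  have restore: "subst \<tau> (subst \<theta> X) = subst \<sigma> X" for X
    unfolding \<theta>_def \<tau>_def by (rule subst_unshift) (use m in \<open>auto simp: vars_subst\<close>)
  have fresh: "x < m \<and> x \<notin> vars (subst \<sigma> A2)" if "x \<in> vars (subst \<theta> B) - vars (subst \<theta> A2)" for x
    using vars_detach_shifted_fresh[OF m vB H] that unfolding \<theta>_def .
  have "derivable T P (subst \<tau> (subst \<theta> B))"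
  proof (rule derivable_instance[OF D])
    show "derivable T P (subst \<tau> (subst \<theta> A2))" "P (subst \<tau> (subst \<theta> B))"
      using D2 PB restore by simp_all
    show "\<forall>x\<in>vars (subst \<theta> B) - vars (subst \<theta> A2).
        \<exists>y. \<tau> x = Var y \<and> y \<notin> vars (subst \<tau> (subst \<theta> A2))"
    proof
      fix x assume "x \<in> vars (subst \<theta> B) - vars (subst \<theta> A2)"
      then show "\<exists>y. \<tau> x = Var y \<and> y \<notin> vars (subst \<tau> (subst \<theta> A2))"
        using fresh[of x] restore by (simp add: \<tau>_def)
    qed
    show "inj_on \<tau> (vars (subst \<theta> B) - vars (subst \<theta> A2))"
    proof (rule inj_onI)
      fix x y
      assume "x \<in> vars (subst \<theta> B) - vars (subst \<theta> A2)" "y \<in> vars (subst \<theta> B) - vars (subst \<theta> A2)"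
        and "\<tau> x = \<tau> y"
      then show "x = y"
        using fresh[of x] fresh[of y] by (simp add: \<tau>_def)
    qed
  qed
  then show ?thesis
    using restore by simp
qed

section \<open>Double-negation-free theorems of Lukasiewicz's axioms\<close>

lemma has_dn_simps [simp]:
  "\<not> has_dn (Var x)"
  "has_dn (a \<rightarrow> b) \<longleftrightarrow> has_dn a \<or> has_dn b"
  "\<not> has_dn (N (Var x))"
  "has_dn (N (a \<rightarrow> b)) \<longleftrightarrow> has_dn a \<or> has_dn b"
  "has_dn (N (N a))"
  by (auto simp: has_dn_def is_dn_def)

definition cd_step :: "form list \<Rightarrow> nat \<times> nat \<Rightarrow> form list" where
  "cd_step Fs ij = (case ij of (i, j) \<Rightarrow>
     if i < length Fs \<and> j < length Fs then
       (case cd_exec (Fs ! i) (Fs ! j) of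
          Some D \<Rightarrow> if has_dn D then Fs else Fs @ [D]
        | None \<Rightarrow> Fs)
     else Fs)"

lemma derivable_cd_step:
  assumes "\<forall>F\<in>set Fs. derivable T P F" and "\<And>X. \<not> has_dn X \<Longrightarrow> P X"
  shows "\<forall>F\<in>set (cd_step Fs ij). derivable T P F"
proof -
  obtain i j where ij: "ij = (i, j)"
    by fastforce
  have "derivable T P D"
    if "i < length Fs" "j < length Fs" "cd_exec (Fs ! i) (Fs ! j) = Some D" "\<not> has_dn D" for D
    using that assms by (metis derivable.detach cd_exec_sound nth_mem)
  then show ?thesis
    using assms(1) by (auto simp: cd_step_def ij split: option.split)
qed

lemma derivable_foldl_cd_step:
  assumes "\<forall>F\<in>set Fs. derivable T P F" and "\<And>X. \<not> has_dn X \<Longrightarrow> P X"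
  shows "\<forall>F\<in>set (foldl cd_step Fs steps). derivable T P F"
  using assms(1)
proof (induction steps arbitrary: Fs)
  case (Cons ij steps)
  then show ?case
    using Cons.IH[OF derivable_cd_step[OF Cons.prems assms(2)]] by simp
qed simp

definition lukasiewicz :: "form set" where
  "lukasiewicz = {L1, L2, L3}"

text \<open>A condensed-detachment derivation of the schemas below, found by proof search: the k-th step
  (i, j) detaches line j from line i and yields line k + 3, where lines 0, 1, 2 are L1, L2, L3.\<close>

definition lukasiewicz_steps :: "(nat \<times> nat) list" where
  "lukasiewicz_steps =
    [(0,2), (3,1), (0,0), (2,4), (0,6), (3,7), (0,8), (9,1), (0,10), (0,1), (11,12), (0,13),
     (5,14), (3,0), (0,16), (17,3), (0,18), (19,15), (15,20), (21,1), (0,22), (15,14), (24,1),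
     (5,25), (5,26), (23,27), (0,28), (29,5), (0,12), (5,29), (29,3), (0,33), (27,33), (30,35),
     (5,36), (32,37), (34,38), (32,39), (31,40), (29,41), (3,38), (32,43), (31,44), (29,45),
     (5,37), (32,47), (31,48), (34,35), (0,50), (26,51), (30,52), (30,53), (30,30), (55,32),
     (54,56), (57,22), (58,33), (55,22), (32,60), (61,33), (30,22), (30,32), (30,55), (65,63),
     (64,66), (32,67), (68,33), (30,57), (30,70), (71,30), (30,61), (30,63), (74,28), (70,75),
     (55,76), (32,77), (78,28), (73,79), (73,33), (30,58), (82,33), (55,83), (32,84), (30,85),
     (86,33), (82,2), (55,88), (32,89), (30,90), (91,33), (73,2), (86,2), (91,2)]"

lemma lukasiewicz_axioms: "\<forall>F\<in>set [L1, L2, L3]. derivable lukasiewicz P F"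
  by (simp add: lukasiewicz_def derivable_member)

text \<open>Evaluating the derivation: every line, as an explicit formula (with variable indices
  in \<open>Suc\<close> form), is derivable with double-negation-free deduced steps.\<close>

lemmas lukasiewicz_chain =
  derivable_foldl_cd_step[OF lukasiewicz_axioms, where steps = lukasiewicz_steps,
    unfolded lukasiewicz_steps_def L1_def L2_def L3_def cd_step_def cd_exec_def normalize_vars_def,
    simplified]

lemma lukasiewicz_theorems:
  assumes "\<And>X. \<not> has_dn X \<Longrightarrow> P X"
  shows "derivable lukasiewicz P (Var 0 \<rightarrow> Var 0)"
    and "derivable lukasiewicz P (N (Var 0) \<rightarrow> N (Var 0))"
    and "derivable lukasiewicz P (Var 0 \<rightarrow> Var 1 \<rightarrow> Var 0)"
    and "derivable lukasiewicz P (Var 0 \<rightarrow> N (Var 1) \<rightarrow> Var 0)"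
    and "derivable lukasiewicz P ((Var 0 \<rightarrow> Var 1) \<rightarrow> Var 0 \<rightarrow> Var 2 \<rightarrow> Var 1)"
    and "derivable lukasiewicz P ((Var 0 \<rightarrow> Var 1) \<rightarrow> Var 0 \<rightarrow> N (Var 2) \<rightarrow> Var 1)"
    and "derivable lukasiewicz P ((Var 0 \<rightarrow> Var 1) \<rightarrow> (Var 2 \<rightarrow> Var 0) \<rightarrow> Var 2 \<rightarrow> Var 1)"
    and "derivable lukasiewicz P
      ((Var 0 \<rightarrow> Var 1 \<rightarrow> Var 2) \<rightarrow> (Var 3 \<rightarrow> Var 0) \<rightarrow> (Var 3 \<rightarrow> Var 1) \<rightarrow> Var 3 \<rightarrow> Var 2)"
    and "derivable lukasiewicz P (Var 0 \<rightarrow> Var 1 \<rightarrow> Var 0 \<rightarrow> Var 1)"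
    and "derivable lukasiewicz P (Var 0 \<rightarrow> N (Var 1) \<rightarrow> N (Var 0 \<rightarrow> Var 1))"
    and "derivable lukasiewicz P (Var 0 \<rightarrow> Var 1 \<rightarrow> N (Var 0 \<rightarrow> N (Var 1)))"
    and "derivable lukasiewicz P (N (Var 0) \<rightarrow> Var 1 \<rightarrow> Var 0 \<rightarrow> Var 1)"
    and "derivable lukasiewicz P (N (Var 0) \<rightarrow> N (Var 1) \<rightarrow> Var 0 \<rightarrow> Var 1)"
    and "derivable lukasiewicz P (N (Var 0) \<rightarrow> Var 1 \<rightarrow> Var 0 \<rightarrow> N (Var 1))"
    and "derivable lukasiewicz P (Var 0 \<rightarrow> Var 1 \<rightarrow> N (Var 0) \<rightarrow> Var 1)"
    and "derivable lukasiewicz P (Var 0 \<rightarrow> N (Var 1) \<rightarrow> N (Var 0) \<rightarrow> Var 1)"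
    and "derivable lukasiewicz P (Var 0 \<rightarrow> Var 1 \<rightarrow> N (Var 0) \<rightarrow> N (Var 1))"
    and "derivable lukasiewicz P (Var 0 \<rightarrow> N (Var 0) \<rightarrow> N (Var 0))"
    and "derivable lukasiewicz P ((Var 0 \<rightarrow> N (Var 1)) \<rightarrow> Var 1 \<rightarrow> N (Var 0))"
    and "derivable lukasiewicz P ((Var 0 \<rightarrow> Var 1) \<rightarrow> (N (Var 0) \<rightarrow> Var 1) \<rightarrow> Var 1)"
  using lukasiewicz_chain[OF assms] by (simp_all add: numeral_eq_Suc)

definition dn_covered :: "form \<Rightarrow> form \<Rightarrow> bool" where
  "dn_covered C X \<longleftrightarrow> (\<forall>u\<in>subforms X. is_dn u \<longrightarrow> (\<exists>w\<in>subforms C. variant u w))"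

lemma dn_covered_if_dn_free: "\<not> has_dn X \<Longrightarrow> dn_covered C X"
  by (auto simp: dn_covered_def has_dn_def)

lemma dn_covered_subform: "X \<in> subforms C \<Longrightarrow> dn_covered C X"
  unfolding dn_covered_def by (meson subforms_trans variant_refl)

lemma dn_covered_simps [simp]:
  "dn_covered C (Var x)"
  "dn_covered C (a \<rightarrow> b) \<longleftrightarrow> dn_covered C a \<and> dn_covered C b"
  "dn_covered C (N (Var x))"
  "dn_covered C (N (a \<rightarrow> b)) \<longleftrightarrow> dn_covered C a \<and> dn_covered C b"
  by (auto simp: dn_covered_def is_dn_def)

lemma dn_covered_variant:
  assumes "dn_covered C X" and "variant X Y"
  shows "dn_covered C Y"
  unfolding dn_covered_def
proof (intro ballI impI)
  fix u assume u: "u \<in> subforms Y" "is_dn u"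
  obtain f where f: "inj f" "Y = rename f X"
    using assms(2) by (auto simp: variant_def)
  then obtain u0 where u0: "u0 \<in> subforms X" "u = rename f u0"
    using u(1) by (auto simp: subforms_rename)
  then have "is_dn u0"
    using u(2) by (cases u0) (auto simp: is_dn_def rename_eq_N)
  then obtain w where "w \<in> subforms C" "variant u0 w"
    using assms(1) u0(1) by (auto simp: dn_covered_def)
  moreover have "variant u u0"
    using f u0 variant_sym by (auto simp: variant_def)
  ultimately show "\<exists>w\<in>subforms C. variant u w"
    using variant_trans by blast
qed

lemma dn_covered_subst_vars:
  assumes "\<not> has_dn S" and "dn_covered C (subst \<sigma> S)"
    and "\<forall>y\<in>vars S. \<theta> y = \<sigma> y \<or> (\<exists>v. \<theta> y = Var v)"
  shows "dn_covered C (subst \<theta> S)"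
  using assms
proof (induction S)
  case (N a)
  then show ?case
    by (cases a) auto
qed auto

section \<open>Derivations under hypotheses\<close>

abbreviation luk_derivable :: "form \<Rightarrow> form \<Rightarrow> bool" where
  "luk_derivable C \<equiv> derivable lukasiewicz (dn_covered C)"

lemmas luk_theorems = lukasiewicz_theorems[of "dn_covered C" for C, OF dn_covered_if_dn_free]

lemma luk_derivable_covered: "luk_derivable C X \<Longrightarrow> dn_covered C X"
  by (erule derivable_pred)
    (auto simp: lukasiewicz_def L1_def L2_def L3_def intro: dn_covered_variant)

fun imps :: "form list \<Rightarrow> form \<Rightarrow> form" where
  "imps [] X = X"
| "imps (G # Gs) X = G \<rightarrow> imps Gs X"

lemma imps_append: "imps (Gs @ Hs) X = imps Gs (imps Hs X)"
  by (induction Gs) auto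

lemma subst_imps: "subst \<sigma> (imps Gs X) = imps (map (subst \<sigma>) Gs) (subst \<sigma> X)"
  by (induction Gs) auto

lemma vars_imps: "vars (imps Gs X) = (\<Union>G\<in>set Gs. vars G) \<union> vars X"
  by (induction Gs) auto

lemma has_dn_imps: "has_dn (imps Gs X) \<longleftrightarrow> (\<exists>G\<in>set Gs. has_dn G) \<or> has_dn X"
  by (induction Gs) auto

lemma dn_covered_imps: "dn_covered C (imps Gs X) \<longleftrightarrow> (\<forall>G\<in>set Gs. dn_covered C G) \<and> dn_covered C X"
  by (induction Gs) auto

lemma luk_derivable_lift:
  assumes "luk_derivable C (P \<rightarrow> Q)" and "\<not> has_dn (P \<rightarrow> Q)"
    and "distinct gs" and "set gs \<inter> vars (P \<rightarrow> Q) = {}"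
  shows "luk_derivable C (imps (map Var gs) P \<rightarrow> imps (map Var gs) Q)"
  using assms(3,4)
proof (induction gs)
  case (Cons g gs)
  let ?G = "imps (map Var gs)"
  have "luk_derivable C
      (subst (Var(0 := ?G P, 1 := ?G Q, 2 := Var g)) ((Var 2 \<rightarrow> Var 0) \<rightarrow> Var 2 \<rightarrow> Var 1))"
    using Cons assms(2)
    by (intro derivable_instance[OF luk_theorems(7)])
      (auto simp: vars_imps has_dn_imps inj_on_def intro!: dn_covered_if_dn_free)
  then show ?case
    by simp
qed (use assms(1) in simp)

lemma luk_derivable_lift2:
  assumes "luk_derivable C (P1 \<rightarrow> P2 \<rightarrow> Q)" and "\<not> has_dn (P1 \<rightarrow> P2 \<rightarrow> Q)"
    and "distinct gs" and "set gs \<inter> vars (P1 \<rightarrow> P2 \<rightarrow> Q) = {}"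
  shows "luk_derivable C (imps (map Var gs) P1 \<rightarrow> imps (map Var gs) P2 \<rightarrow> imps (map Var gs) Q)"
  using assms(3,4)
proof (induction gs)
  case (Cons g gs)
  let ?G = "imps (map Var gs)"
  have "luk_derivable C (subst (Var(0 := ?G P1, 1 := ?G P2, 2 := ?G Q, 3 := Var g))
      ((Var 3 \<rightarrow> Var 0) \<rightarrow> (Var 3 \<rightarrow> Var 1) \<rightarrow> Var 3 \<rightarrow> Var 2))"
    using Cons assms(2)
    by (intro derivable_instance[OF luk_theorems(8)])
      (auto simp: vars_imps has_dn_imps inj_on_def intro!: dn_covered_if_dn_free)
  then show ?case
    by simp
qed (use assms(1) in simp)

text \<open>To use a schema under hypotheses \<open>\<Gamma>\<close>, it is first lifted over fresh variables standing
  for \<open>\<Gamma>\<close>, which are then instantiated together with the schema variables.\<close>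

lemma obtain_placeholders:
  assumes "finite V"
  obtains gs \<sigma> where "distinct gs" and "set gs \<inter> V = {}" and "map \<sigma> gs = \<Gamma>"
    and "\<And>x. x \<in> V \<Longrightarrow> \<sigma> x = s x"
    and "\<And>X. vars X \<subseteq> V \<Longrightarrow> subst \<sigma> (imps (map Var gs) X) = imps \<Gamma> (subst s X)"
proof -
  obtain m where m: "\<forall>x\<in>V. x < m"
    using assms finite_nat_set_iff_bounded by auto
  define \<sigma> where "\<sigma> = (\<lambda>y. if m \<le> y \<and> y < m + length \<Gamma> then \<Gamma> ! (y - m) else s y)"
  have map: "map \<sigma> [m..<m + length \<Gamma>] = \<Gamma>"
    by (rule nth_equalityI) (auto simp: \<sigma>_def)
  have agree: "\<sigma> x = s x" if "x \<in> V" for x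
  proof -
    have "x < m"
      using m that by blast
    then show ?thesis
      by (simp add: \<sigma>_def)
  qed
  show thesis
  proof (rule that[OF _ _ map agree])
    show "distinct [m..<m + length \<Gamma>]" "set [m..<m + length \<Gamma>] \<inter> V = {}"
      using m by auto
    show "subst \<sigma> (imps (map Var [m..<m + length \<Gamma>]) X) = imps \<Gamma> (subst s X)"
      if "vars X \<subseteq> V" for X
    proof -
      have "subst \<sigma> X = subst s X"
        using agree that by (intro subst_cong) auto
      then show ?thesis
        using map by (simp add: subst_imps comp_def)
    qed
  qed
qed

lemma luk_derivable_mp_under:
  assumes R: "luk_derivable C (P \<rightarrow> Q)" and "\<not> has_dn (P \<rightarrow> Q)" and "vars Q \<subseteq> vars P"
    and "luk_derivable C (imps \<Gamma> (subst s P))" and "dn_covered C (imps \<Gamma> (subst s Q))"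
  shows "luk_derivable C (imps \<Gamma> (subst s Q))"
proof -
  obtain gs \<sigma> where gs: "distinct gs" "set gs \<inter> vars (P \<rightarrow> Q) = {}"
    and restore: "\<And>X. vars X \<subseteq> vars (P \<rightarrow> Q) \<Longrightarrow>
      subst \<sigma> (imps (map Var gs) X) = imps \<Gamma> (subst s X)"
    by (rule obtain_placeholders[of "vars (P \<rightarrow> Q)" \<Gamma> s]) auto
  let ?G = "imps (map Var gs)"
  have "luk_derivable C (subst \<sigma> (?G Q))"
  proof (rule derivable_mp[OF luk_derivable_lift[OF R assms(2) gs]])
    show "luk_derivable C (subst \<sigma> (?G P))" "dn_covered C (subst \<sigma> (?G Q))"
      using assms(4,5) restore by auto
    show "vars (?G Q) \<subseteq> vars (?G P)"
      using assms(3) by (auto simp: vars_imps)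
  qed
  then show ?thesis
    using restore by simp
qed

lemma luk_derivable_mp2_under:
  assumes R: "luk_derivable C (P1 \<rightarrow> P2 \<rightarrow> Q)" and dn_free: "\<not> has_dn (P1 \<rightarrow> P2 \<rightarrow> Q)"
    and vQ: "vars Q \<subseteq> vars P1 \<union> vars P2"
    and D1: "luk_derivable C (imps \<Gamma> (subst s P1))" and D2: "luk_derivable C (imps \<Gamma> (subst s P2))"
    and H: "\<forall>x\<in>vars P1 - vars P2. vars (s x) \<subseteq> (\<Union>G\<in>set \<Gamma>. vars G)"
    and cov: "dn_covered C (imps \<Gamma> (subst s Q))"
  shows "luk_derivable C (imps \<Gamma> (subst s Q))"
proof -
  let ?V = "vars (P1 \<rightarrow> P2 \<rightarrow> Q)"
  obtain gs \<sigma> where gs: "distinct gs" "set gs \<inter> ?V = {}" and \<Gamma>: "map \<sigma> gs = \<Gamma>"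
    and agree: "\<And>x. x \<in> ?V \<Longrightarrow> \<sigma> x = s x"
    and restore: "\<And>X. vars X \<subseteq> ?V \<Longrightarrow> subst \<sigma> (imps (map Var gs) X) = imps \<Gamma> (subst s X)"
    by (rule obtain_placeholders[of ?V \<Gamma> s]) auto
  let ?G = "imps (map Var gs)"
  have r: "subst \<sigma> (?G P1) = imps \<Gamma> (subst s P1)" "subst \<sigma> (?G P2) = imps \<Gamma> (subst s P2)"
    "subst \<sigma> (?G Q) = imps \<Gamma> (subst s Q)"
    by (rule restore; auto)+
  have "luk_derivable C (subst \<sigma> (?G Q))"
  proof (rule derivable_mp2[OF luk_derivable_lift2[OF R dn_free gs]])
    show "luk_derivable C (subst \<sigma> (?G P1))" "luk_derivable C (subst \<sigma> (?G P2))"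
      "dn_covered C (subst \<sigma> (?G Q))"
      using D1 D2 cov r by simp_all
    show "vars (?G Q) \<subseteq> vars (?G P1) \<union> vars (?G P2)"
      using vQ by (auto simp: vars_imps)
    show "\<forall>x\<in>vars (?G P1) - vars (?G P2). vars (\<sigma> x) \<inter> vars (subst \<sigma> (?G P2))
        \<subseteq> (\<Union>z\<in>vars (?G P1) \<inter> vars (?G P2). vars (\<sigma> z))"
    proof
      fix x assume "x \<in> vars (?G P1) - vars (?G P2)"
      then have "x \<in> vars P1 - vars P2"
        by (auto simp: vars_imps)
      then have "vars (\<sigma> x) \<subseteq> (\<Union>y\<in>set gs. vars (\<sigma> y))"
        using H agree[of x] \<Gamma>[symmetric] by auto
      then show "vars (\<sigma> x) \<inter> vars (subst \<sigma> (?G P2))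
          \<subseteq> (\<Union>z\<in>vars (?G P1) \<inter> vars (?G P2). vars (\<sigma> z))"
        by (auto simp: vars_imps)
    qed
    show "dn_covered C (subst \<theta> (?G P2 \<rightarrow> ?G Q))"
      if "\<forall>y\<in>vars (?G P1). \<theta> y = \<sigma> y" "\<forall>y. y \<notin> vars (?G P1) \<longrightarrow> (\<exists>v. \<theta> y = Var v)" for \<theta>
    proof (rule dn_covered_subst_vars)
      show "\<not> has_dn (?G P2 \<rightarrow> ?G Q)"
        using dn_free by (simp add: has_dn_imps)
      show "dn_covered C (subst \<sigma> (?G P2 \<rightarrow> ?G Q))"
        using luk_derivable_covered[OF D2] cov r by (simp add: dn_covered_imps)
      show "\<forall>y\<in>vars (?G P2 \<rightarrow> ?G Q). \<theta> y = \<sigma> y \<or> (\<exists>v. \<theta> y = Var v)"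
        using that by blast
    qed
  qed
  then show ?thesis
    using r by simp
qed

section \<open>Kalmar's lemma\<close>

definition with_sign :: "bool \<Rightarrow> form \<Rightarrow> form" where
  "with_sign b A = (if b then A else N A)"

lemma subst_with_sign [simp]: "subst \<sigma> (with_sign b A) = with_sign b (subst \<sigma> A)"
  by (simp add: with_sign_def)

lemma vars_with_sign [simp]: "vars (with_sign b A) = vars A"
  by (simp add: with_sign_def)

lemma dn_covered_with_sign_Var [simp]: "dn_covered C (with_sign b (Var x))"
  by (simp add: with_sign_def)

text \<open>The one of \<open>A\<close> and its negation that is true under \<open>v\<close>, except that a false \<open>N B\<close>
  gives \<open>B\<close> rather than \<open>N (N B)\<close>, so that no double negation is introduced.\<close>

definition kalmar_form :: "(nat \<Rightarrow> bool) \<Rightarrow> form \<Rightarrow> form" where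
  "kalmar_form v A = (if eval v A then A else case A of N B \<Rightarrow> B | _ \<Rightarrow> N A)"

lemma kalmar_form_Var [simp]: "kalmar_form v (Var p) = with_sign (v p) (Var p)"
  by (simp add: kalmar_form_def with_sign_def)

lemma kalmar_form_imp: "kalmar_form v (a \<rightarrow> b) = with_sign (eval v (a \<rightarrow> b)) (a \<rightarrow> b)"
  by (simp add: kalmar_form_def with_sign_def)

definition literals :: "(nat \<Rightarrow> bool) \<Rightarrow> nat list \<Rightarrow> form list" where
  "literals v ps = map (\<lambda>p. with_sign (v p) (Var p)) ps"

lemma vars_literals: "(\<Union>G\<in>set (literals v ps). vars G) = set ps"
  by (auto simp: literals_def)

lemma dn_covered_literals: "G \<in> set (literals v ps) \<Longrightarrow> dn_covered C G"
  by (auto simp: literals_def)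

lemma luk_derivable_weaken:
  assumes "luk_derivable C X" and "q \<notin> vars X" and "dn_covered C X"
  shows "luk_derivable C (with_sign b (Var q) \<rightarrow> X)"
proof -
  have "luk_derivable C (Var 0 \<rightarrow> with_sign b (Var 1) \<rightarrow> Var 0)"
    by (cases b) (simp_all add: with_sign_def luk_theorems del: One_nat_def)
  then have "luk_derivable C (subst (Var(0 := X, 1 := Var q)) (with_sign b (Var 1) \<rightarrow> Var 0))"
    by (rule derivable_instance) (use assms in \<open>auto simp: inj_on_def\<close>)
  then show ?thesis
    by simp
qed

lemma luk_derivable_weaken_inner:
  assumes "luk_derivable C (L \<rightarrow> X)" and "q \<notin> vars (L \<rightarrow> X)" and "dn_covered C (L \<rightarrow> X)"
  shows "luk_derivable C (L \<rightarrow> with_sign b (Var q) \<rightarrow> X)"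
proof -
  have "luk_derivable C ((Var 0 \<rightarrow> Var 1) \<rightarrow> Var 0 \<rightarrow> with_sign b (Var 2) \<rightarrow> Var 1)"
    by (cases b) (simp_all add: with_sign_def luk_theorems del: One_nat_def)
  then have "luk_derivable C
      (subst (Var(0 := L, 1 := X, 2 := Var q)) (Var 0 \<rightarrow> with_sign b (Var 2) \<rightarrow> Var 1))"
    by (rule derivable_instance) (use assms in \<open>auto simp: inj_on_def\<close>)
  then show ?thesis
    by simp
qed

lemma luk_derivable_weaken_literals:
  assumes "luk_derivable C X" and "dn_covered C X" and "distinct qs" and "set qs \<inter> vars X = {}"
  shows "luk_derivable C (imps (literals v qs) X)"
  using assms(3,4)
proof (induction qs)
  case (Cons q qs)
  then show ?case
    using assms(2)
    by (auto simp: literals_def vars_imps dn_covered_imps intro!: luk_derivable_weaken)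
qed (simp add: literals_def assms(1))

lemma luk_derivable_hypothesis:
  assumes "distinct ps" and "p \<in> set ps"
  shows "luk_derivable C (imps (literals v ps) (with_sign (v p) (Var p)))"
proof -
  let ?L = "with_sign (v p) (Var p)"
  obtain pre suf where ps: "ps = pre @ p # suf"
    using assms(2) by (meson split_list)
  have "luk_derivable C (with_sign (v p) (Var 0) \<rightarrow> with_sign (v p) (Var 0))"
    by (cases "v p") (simp_all add: with_sign_def luk_theorems del: One_nat_def)
  moreover have "variant (with_sign (v p) (Var 0) \<rightarrow> with_sign (v p) (Var 0)) (?L \<rightarrow> ?L)"
    using variant_rename_inj_on[of "\<lambda>_. p" "with_sign (v p) (Var 0) \<rightarrow> with_sign (v p) (Var 0)"]
    by (cases "v p") (simp_all add: with_sign_def)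
  ultimately have "luk_derivable C (?L \<rightarrow> ?L)"
    using derivable_variant dn_covered_variant by blast
  then have "luk_derivable C (?L \<rightarrow> imps (literals v qs) ?L)" if "distinct qs" "p \<notin> set qs" for qs
    using that
  proof (induction qs)
    case (Cons q qs)
    then show ?case
      by (auto simp: literals_def vars_imps dn_covered_imps intro!: luk_derivable_weaken_inner)
  qed (simp add: literals_def with_sign_def)
  then have "luk_derivable C (imps (literals v pre) (?L \<rightarrow> imps (literals v suf) ?L))"
    using assms(1) ps
    by (intro luk_derivable_weaken_literals) (auto simp: vars_imps dn_covered_imps literals_def)
  then show ?thesis
    by (simp add: ps literals_def imps_append)
qed

text \<open>The flag \<open>n\<close> marks a false negation \<open>N B\<close>, whose Kalmar form is \<open>B\<close>.\<close>

lemma kalmar_form_decompose: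
  obtains B n where "A = with_sign (\<not> n) B" and "n \<Longrightarrow> eval v B"
    and "kalmar_form v A = with_sign (eval v B) B"
proof (cases "\<exists>B. A = N B \<and> eval v B")
  case True
  then obtain B where "A = N B" "eval v B"
    by blast
  then show ?thesis
    by (intro that[where B = B and n = True]) (auto simp: kalmar_form_def with_sign_def)
next
  case False
  then show ?thesis
    by (intro that[where B = A and n = False])
      (auto simp: kalmar_form_def with_sign_def split: form.split)
qed

text \<open>The nine cases of Kalmar's lemma for an implication, each operand being true, false, or a
  false negation.\<close>

lemma luk_truth_table_imp:
  assumes "n0 \<Longrightarrow> w 0" and "n1 \<Longrightarrow> w 1"
  defines "X \<equiv> with_sign (\<not> n0) (Var 0) \<rightarrow> with_sign (\<not> n1) (Var 1)"
  shows "luk_derivable C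
    (with_sign (w 0) (Var 0) \<rightarrow> with_sign (w 1) (Var 1) \<rightarrow> with_sign (eval w X) X)"
  using assms
  by (cases "w 0"; cases "w 1"; cases n0; cases n1)
    (simp_all add: with_sign_def luk_theorems del: One_nat_def)

lemma luk_derivable_dn_intro:
  assumes "luk_derivable C (imps \<Gamma> r)" and "vars r \<subseteq> (\<Union>G\<in>set \<Gamma>. vars G)"
    and "\<forall>G\<in>set \<Gamma>. dn_covered C G" and "N (N r) \<in> subforms C"
  shows "luk_derivable C (imps \<Gamma> (N (N r)))"
proof -
  have "N (N r) \<in> subforms C" "N r \<in> subforms C" "r \<in> subforms C"
    using assms(4) subforms_trans[of _ "N (N r)" C] by (auto simp: subforms_refl)
  then have cov: "dn_covered C (N (N r))" "dn_covered C (N r)" "dn_covered C r"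
    by (simp_all add: dn_covered_subform)
  have "luk_derivable C (imps \<Gamma> (subst (Var(0 := r)) (N (Var 0) \<rightarrow> N (Var 0))))"
    using assms cov
    by (intro luk_derivable_mp_under[OF luk_theorems(18)]) (auto simp: dn_covered_imps)
  then have "luk_derivable C (imps \<Gamma> (subst (Var(0 := N r, 1 := r)) (N (Var 0))))"
    using assms cov
    by (intro luk_derivable_mp2_under[OF luk_theorems(19)]) (auto simp: dn_covered_imps)
  then show ?thesis
    by simp
qed

lemma luk_derivable_kalmar_imp:
  assumes "luk_derivable C (imps (literals v ps) (kalmar_form v a))"
    and "luk_derivable C (imps (literals v ps) (kalmar_form v b))"
    and "vars (a \<rightarrow> b) \<subseteq> set ps" and "dn_covered C a" and "dn_covered C b"
  shows "luk_derivable C (imps (literals v ps) (kalmar_form v (a \<rightarrow> b)))"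
proof -
  obtain Ba na where a: "a = with_sign (\<not> na) Ba" "na \<Longrightarrow> eval v Ba"
    "kalmar_form v a = with_sign (eval v Ba) Ba"
    by (rule kalmar_form_decompose) blast
  obtain Bb nb where b: "b = with_sign (\<not> nb) Bb" "nb \<Longrightarrow> eval v Bb"
    "kalmar_form v b = with_sign (eval v Bb) Bb"
    by (rule kalmar_form_decompose) blast
  let ?s = "Var(0 := Ba, 1 := Bb)"
  let ?X = "with_sign (\<not> na) (Var 0) \<rightarrow> with_sign (\<not> nb) (Var 1)"
  have X: "subst ?s ?X = a \<rightarrow> b" "eval (\<lambda>y. eval v (?s y)) ?X = eval v (a \<rightarrow> b)"
    using a b by (simp_all add: eval_subst[symmetric])
  have "luk_derivable C (imps (literals v ps)
      (subst ?s (with_sign (eval (\<lambda>y. eval v (?s y)) ?X) ?X)))"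
    using assms a b
    by (intro luk_derivable_mp2_under[OF luk_truth_table_imp])
      (auto simp: X vars_literals dn_covered_imps dn_covered_literals with_sign_def)
  then show ?thesis
    using X by (simp add: kalmar_form_imp)
qed

lemma luk_derivable_kalmar_N:
  assumes "luk_derivable C (imps (literals v ps) (kalmar_form v a))"
    and "vars a \<subseteq> set ps" and "N a \<in> subforms C"
  shows "luk_derivable C (imps (literals v ps) (kalmar_form v (N a)))"
proof (cases "\<not> eval v a \<and> (\<exists>r. a = N r)")
  case True
  then obtain r where r: "a = N r" "eval v r"
    by auto
  then have "luk_derivable C (imps (literals v ps) (N (N r)))"
    using assms
    by (intro luk_derivable_dn_intro) (auto simp: kalmar_form_def vars_literals dn_covered_literals)
  then show ?thesis
    using r by (simp add: kalmar_form_def)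
next
  case False
  then have "kalmar_form v (N a) = kalmar_form v a"
    by (auto simp: kalmar_form_def split: form.split)
  then show ?thesis
    using assms(1) by simp
qed

lemma luk_derivable_kalmar:
  assumes "distinct ps" and "vars C \<subseteq> set ps" and "A \<in> subforms C"
  shows "luk_derivable C (imps (literals v ps) (kalmar_form v A))"
  using assms(3)
proof (induction A)
  case (Var p)
  then have "p \<in> set ps"
    using assms(2) vars_subforms by fastforce
  then show ?case
    using luk_derivable_hypothesis[OF assms(1)] by simp
next
  case (I a b)
  have "a \<in> subforms C" "b \<in> subforms C"
    using I.prems subforms_trans[of _ "a \<rightarrow> b" C] by (auto simp: subforms_refl)
  moreover have "vars (a \<rightarrow> b) \<subseteq> set ps"
    using I.prems assms(2) vars_subforms by blast
  ultimately show ?case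
    using I.IH by (intro luk_derivable_kalmar_imp) (simp_all add: dn_covered_subform)
next
  case (N a)
  have "a \<in> subforms C"
    using N.prems subforms_trans[of _ "N a" C] by (auto simp: subforms_refl)
  moreover have "vars a \<subseteq> set ps"
    using N.prems assms(2) vars_subforms by fastforce
  ultimately show ?case
    using N by (intro luk_derivable_kalmar_N) simp_all
qed

lemma luk_derivable_tautology_under:
  assumes "distinct (qs @ rs)" and "vars C \<subseteq> set (qs @ rs)" and "tautology C"
  shows "luk_derivable C (imps (literals v qs) C)"
  using assms(1,2)
proof (induction rs arbitrary: qs v)
  case Nil
  then show ?case
    using luk_derivable_kalmar[of qs C C v] assms(3)
    by (simp add: subforms_refl kalmar_form_def tautology_def)
next
  case (Cons p rs)
  have lits: "literals (v(p := b)) (qs @ [p]) = literals v qs @ [with_sign b (Var p)]" for b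
    using Cons.prems(1) by (auto simp: literals_def)
  have "luk_derivable C (imps (literals (v(p := b)) (qs @ [p])) C)" for b
    using Cons.IH[of "qs @ [p]"] Cons.prems by simp
  then have "luk_derivable C (imps (literals v qs) (with_sign b (Var p) \<rightarrow> C))" for b
    by (simp only: lits imps_append imps.simps)
  from this[of True] this[of False]
  have "luk_derivable C (imps (literals v qs) (subst (Var(0 := Var p, 1 := C)) (Var 1)))"
    by (intro luk_derivable_mp2_under[OF luk_theorems(20)])
      (auto simp: with_sign_def dn_covered_imps dn_covered_literals subforms_refl
        dn_covered_subform)
  then show ?case
    by simp
qed

lemma luk_derivable_tautology: "tautology C \<Longrightarrow> luk_derivable C C"
  using luk_derivable_tautology_under[where qs = "[]" and rs = "sorted_list_of_set (vars C)"]
  by (simp add: literals_def)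

section \<open>Strong double-negation elimination\<close>

lemma eval_dn_replace: "eval v (dn_replace S t) = eval v t"
  by (induction S t rule: dn_replace.induct) (auto split: form.splits)

lemma dn_free_proof_derivable:
  assumes "proof_of T ps X" and "dn_free_proof T ps"
  shows "derivable T (dn_covered C) X"
  using assms(2)
  by (intro proof_of_derivable[OF assms(1)]) (simp add: dn_free_proof_def dn_covered_if_dn_free)

theorem corollary1:
  fixes T :: "form set"
  assumes "\<forall>A. provable T A \<longleftrightarrow> tautology A"
    and "\<exists>ps. proof_of T ps L1 \<and> dn_free_proof T ps"
    and "\<exists>ps. proof_of T ps L2 \<and> dn_free_proof T ps"
    and "\<exists>ps. proof_of T ps L3 \<and> dn_free_proof T ps"
  shows "strong_dn_elim T"
  unfolding strong_dn_elim_def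
proof (intro allI impI)
  fix B S
  assume "provable T B \<and> S \<subseteq> {u \<in> subforms B. is_dn u}"
  then have "tautology B"
    using assms(1) by blast
  let ?C = "dn_replace S B"
  have "tautology ?C"
    using \<open>tautology B\<close> by (simp add: tautology_def eval_dn_replace)
  then have "luk_derivable ?C ?C"
    by (rule luk_derivable_tautology)
  moreover have "derivable T (dn_covered ?C) A" if "is_axiom lukasiewicz A" for A
  proof -
    have "\<exists>L\<in>lukasiewicz. variant L A"
      using that by (simp add: is_axiom_def)
    then obtain L where L: "L \<in> {L1, L2, L3}" "variant L A"
      by (auto simp: lukasiewicz_def)
    then have "derivable T (dn_covered ?C) L"
      using assms(2-4) by (auto intro: dn_free_proof_derivable)
    then show ?thesis
      by (rule derivable_variant[OF _ L(2) dn_covered_variant])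
  qed
  ultimately have "derivable T (dn_covered ?C) ?C"
    by (rule derivable_replace_axioms)
  then obtain ps where "proof_of T ps ?C" "\<forall>A\<in>deduced_steps T ps. dn_covered ?C A"
    using derivable_imp_proof by blast
  then show "\<exists>ps. proof_of T ps ?C \<and> (\<forall>A\<in>deduced_steps T ps.
      \<forall>u\<in>subforms A. is_dn u \<longrightarrow> (\<exists>w\<in>subforms ?C. variant u w))"
    by (intro exI[of _ ps]) (simp add: dn_covered_def)
qed

end
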